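(* Let $U$ and $V$ be finite-dimensional vector spaces over a field $\mathbb{K}$, and let $\mathcal{S}$ be a linear subspace of $\mathcal{L}(U,V)$ with $\operatorname{codim}_{\mathcal{L}(U,V)}\mathcal{S}\leq \dim V-2$. Then every range-compatible group homomorphism $F:(\mathcal{S},+)\to(V,+)$ is local, i.e. there exists $x\in U$ such that $F(s)=s(x)$ for all $s\in\mathcal{S}$.
   Context: $\mathcal{L}(U,V)$ is the space of linear maps from $U$ to $V$. For a subset $\mathcal{S}$ of $\mathcal{L}(U,V)$, a map $F:\mathcal{S}\to V$ is range-compatible when $F(s)\in\operatorname{im}s$ for all $s\in\mathcal{S}$; it is local when there exists $x\in U$ with $F(s)=s(x)$ for all $s\in\mathcal{S}$. *)

theory Defs
  imports Complex_Main "HOL-Library.Function_Algebras"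
begin

definition fun_scale :: "('k::field \<Rightarrow> 'v::ab_group_add \<Rightarrow> 'v) \<Rightarrow> 'k \<Rightarrow> ('u \<Rightarrow> 'v) \<Rightarrow> ('u \<Rightarrow> 'v)"
  where "fun_scale scaleV c f = (\<lambda>x. scaleV c (f x))"

definition lin_maps :: "('k::field \<Rightarrow> 'u::ab_group_add \<Rightarrow> 'u) \<Rightarrow> ('k \<Rightarrow> 'v::ab_group_add \<Rightarrow> 'v) \<Rightarrow> ('u \<Rightarrow> 'v) set"
  where "lin_maps scaleU scaleV = {f. Vector_Spaces.linear scaleU scaleV f}"

definition range_compatible :: "('u \<Rightarrow> 'v) set \<Rightarrow> (('u \<Rightarrow> 'v) \<Rightarrow> 'v) \<Rightarrow> bool"
  where "range_compatible S F \<longleftrightarrow> (\<forall>s\<in>S. F s \<in> range s)"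

definition is_local :: "('u \<Rightarrow> 'v) set \<Rightarrow> (('u \<Rightarrow> 'v) \<Rightarrow> 'v) \<Rightarrow> bool"
  where "is_local S F \<longleftrightarrow> (\<exists>x. \<forall>s\<in>S. F s = s x)"

definition additive_on :: "('u \<Rightarrow> 'v::plus) set \<Rightarrow> (('u \<Rightarrow> 'v) \<Rightarrow> 'v) \<Rightarrow> bool"
  where "additive_on S F \<longleftrightarrow> (\<forall>s\<in>S. \<forall>t\<in>S. F (s + t) = F s + F t)"

end

theory Submission
  imports Defs
begin

text \<open>
  The proof is an induction on \<open>dim U\<close>. Since the type of \<open>U\<close> cannot shrink, the induction runs
  downwards over subspaces \<open>Z \<subseteq> U\<close>: the maps in \<open>S\<close> are assumed to vanish on \<open>Z\<close>, i.e. to live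
  in \<open>L(U/Z, V)\<close>, and \<open>dim U\<close> is replaced by \<open>dim U - dim Z\<close>.

  For \<open>x \<notin> Z\<close> let \<open>S'\<close> consist of the maps in \<open>S\<close> vanishing at \<open>x\<close>. Rank-nullity for \<open>s \<mapsto> s x\<close>
  shows that \<open>S'\<close> satisfies the codimension bound relative to \<open>span (Z \<union> {x})\<close> and that the
  vectors \<open>s x\<close> span a space of dimension at least 2. By induction \<open>F\<close> agrees with evaluation at
  some \<open>x'\<close> on \<open>S'\<close>, so \<open>H s = F s - s x'\<close> is additive, range-compatible and zero on \<open>S'\<close>. Then
  \<open>H s\<close> always lies on the line through \<open>s x\<close>: otherwise, for a family of linear forms on \<open>V\<close>
  that separates points and, except for one of them, kills \<open>s x\<close> but not \<open>H s\<close>, composing with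
  these forms would shrink \<open>S'\<close> by more than its codimension permits. An additive \<open>H\<close> with
  \<open>H s \<in> span {s x}\<close> and at least two independent values \<open>s x\<close> is \<open>H s = c (s x)\<close>, whence
  \<open>F s = s (c x + x')\<close>.
\<close>

text \<open>
  The maps \<open>U \<Rightarrow> V\<close> do not form a finite-dimensional space, and \<open>dim\<close> is \<open>0\<close> on sets without a
  finite basis, so dimensions of sets of maps are only compared inside the span of a finite set.
\<close>

definition finitely_spanned :: "('k::field \<Rightarrow> 'v::ab_group_add \<Rightarrow> 'v) \<Rightarrow> 'v set \<Rightarrow> bool"
  where "finitely_spanned scale A \<longleftrightarrow> (\<exists>B. finite B \<and> A \<subseteq> module.span scale B)"

context vector_space
begin

lemma finitely_spanned_subset:
  assumes "finitely_spanned scale C" "A \<subseteq> span C"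
  shows "finitely_spanned scale A"
proof -
  obtain B where "finite B" "C \<subseteq> span B"
    using assms(1) unfolding finitely_spanned_def by blast
  then have "A \<subseteq> span B"
    using assms(2) span_mono[of C "span B"] by (simp add: span_span)
  with \<open>finite B\<close> show ?thesis
    unfolding finitely_spanned_def by blast
qed

lemma independent_in_span_finitely_spanned:
  assumes "finitely_spanned scale C" "independent B" "B \<subseteq> span C"
  shows "finite B" and "card B \<le> dim C"
proof -
  obtain B0 where B0: "finite B0" "C \<subseteq> span B0"
    using assms(1) unfolding finitely_spanned_def by blast
  obtain BC where BC: "BC \<subseteq> C" "independent BC" "C \<subseteq> span BC" "card BC = dim C"
    by (rule basis_exists)
  have "finite BC"
    using independent_span_bound[OF B0(1) BC(2)] BC(1) B0(2) by blast
  moreover have "B \<subseteq> span BC"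
    using assms(3) BC(3) span_mono[of C "span BC"] by (simp add: span_span)
  ultimately have "finite B \<and> card B \<le> card BC"
    using independent_span_bound assms(2) by blast
  then show "finite B" "card B \<le> dim C"
    using BC(4) by simp_all
qed

lemma dim_mono_finitely_spanned:
  assumes "finitely_spanned scale C" "A \<subseteq> span C"
  shows "dim A \<le> dim C"
proof -
  obtain BA where "BA \<subseteq> A" "independent BA" "A \<subseteq> span BA" "card BA = dim A"
    by (rule basis_exists)
  then show ?thesis
    using independent_in_span_finitely_spanned(2)[OF assms(1)] assms(2) by fastforce
qed

lemma dim_less_finitely_spanned:
  assumes "finitely_spanned scale C" "subspace A" "A \<subseteq> span C" "x \<in> span C" "x \<notin> A"
  shows "dim A < dim C"
proof -
  obtain BA where BA: "BA \<subseteq> A" "independent BA" "A \<subseteq> span BA" "card BA = dim A"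
    by (rule basis_exists)
  have "span BA = A"
    using BA(1,3) assms(2) span_subspace by blast
  then have indep: "independent (insert x BA)"
    using independent_insertI[OF _ BA(2)] assms(5) by blast
  have sub: "insert x BA \<subseteq> span C"
    using BA(1) assms(3,4) by blast
  have "finite BA"
    using independent_in_span_finitely_spanned(1)[OF assms(1) BA(2)] BA(1) assms(3) by blast
  moreover have "x \<notin> BA"
    using BA(1) assms(5) by blast
  ultimately have "card (insert x BA) = dim A + 1"
    using BA(4) by simp
  with independent_in_span_finitely_spanned(2)[OF assms(1) indep sub] show ?thesis
    by simp
qed

lemma representation_eq_0_imp_eq_0:
  assumes "independent B" "y \<in> span B" "\<And>b. b \<in> B \<Longrightarrow> representation B y b = 0"
  shows "y = 0"
proof -
  have "representation B y = (\<lambda>b. 0)"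
    using assms(3) representation_ne_zero by fastforce
  then show ?thesis
    using sum_nonzero_representation_eq[OF assms(1,2)] by simp
qed

lemma obtain_independent_pair:
  assumes "2 \<le> dim A"
  obtains a b where "a \<in> A" "b \<in> A" "a \<noteq> 0" "b \<notin> span {a}"
proof -
  obtain B where B: "B \<subseteq> A" "independent B" "card B = dim A"
    using basis_exists by metis
  then obtain a b where ab: "a \<in> B" "b \<in> B" "a \<noteq> b"
    using assms by (metis One_nat_def Suc_1 card_le_Suc_iff insert_iff not_less_eq_eq)
  have "b \<notin> span (B - {b})"
    using B(2) ab(2) unfolding dependent_def by blast
  moreover have "span {a} \<subseteq> span (B - {b})"
    using ab by (intro span_mono) auto
  ultimately show ?thesis
    using that B(1,2) ab dependent_zero by blast
qed

lemma coefficients_eq_of_scale_add: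
  assumes "x \<noteq> 0" "y \<notin> span {x}" "c *s (x + y) = a *s x + b *s y"
  shows "a = c" and "b = c"
proof -
  have eq: "(c - b) *s y = (a - c) *s x"
    using assms(3) by (simp add: algebra_simps)
  show "b = c"
  proof (rule ccontr)
    assume "b \<noteq> c"
    then have "y = (inverse (c - b) * (a - c)) *s x"
      using arg_cong[OF eq, of "scale (inverse (c - b))"] by simp
    then show False
      using assms(2) unfolding span_singleton by blast
  qed
  then show "a = c"
    using eq assms(1) by simp
qed

lemma additive_collinear_imp_scalar:
  fixes g H :: "'c::plus \<Rightarrow> 'b"
  assumes closed: "\<And>s t. s \<in> S \<Longrightarrow> t \<in> S \<Longrightarrow> s + t \<in> S"
    and g_add: "\<And>s t. s \<in> S \<Longrightarrow> t \<in> S \<Longrightarrow> g (s + t) = g s + g t"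
    and H_add: "\<And>s t. s \<in> S \<Longrightarrow> t \<in> S \<Longrightarrow> H (s + t) = H s + H t"
    and collinear: "\<And>s. s \<in> S \<Longrightarrow> H s \<in> span {g s}"
    and two: "2 \<le> dim (g ` S)"
  obtains c where "\<And>s. s \<in> S \<Longrightarrow> H s = c *s g s"
proof -
  have "\<forall>s\<in>S. \<exists>k. H s = k *s g s"
    using collinear unfolding span_singleton by blast
  then obtain coef where coef: "\<And>s. s \<in> S \<Longrightarrow> H s = coef s *s g s"
    by metis
  have same: "coef s = coef t"
    if "s \<in> S" "t \<in> S" "g s \<noteq> 0" "g t \<notin> span {g s}" for s t
  proof -
    have "coef (s + t) *s (g s + g t) = H (s + t)"
      using coef[OF closed[OF that(1,2)]] g_add[OF that(1,2)] by simp
    also have "\<dots> = coef s *s g s + coef t *s g t"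
      using H_add[OF that(1,2)] coef that(1,2) by simp
    finally have "coef (s + t) *s (g s + g t) = coef s *s g s + coef t *s g t" .
    from coefficients_eq_of_scale_add[OF that(3,4) this] show ?thesis
      by simp
  qed
  obtain s1 s2 where s12: "s1 \<in> S" "s2 \<in> S" "g s1 \<noteq> 0" "g s2 \<notin> span {g s1}"
    using obtain_independent_pair[OF two] by blast
  have coef_eq: "coef s = coef s1" if s: "s \<in> S" "g s \<noteq> 0" for s
  proof (cases "g s \<in> span {g s1}")
    case False
    then show ?thesis
      using same[OF s12(1) s(1) s12(3)] by simp
  next
    case True
    then have "span {g s} \<subseteq> span {g s1}"
      using span_mono[of "{g s}" "span {g s1}"] by (simp add: span_span)
    then have "g s2 \<notin> span {g s}"
      using s12(4) by blast
    then show ?thesis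
      using same[OF s(1) s12(2) s(2)] same[OF s12] by simp
  qed
  have "H s = coef s1 *s g s" if "s \<in> S" for s
    using coef[OF that] coef_eq[OF that] by (cases "g s = 0") auto
  then show ?thesis
    using that by blast
qed

end

context vector_space_pair
begin

lemma finitely_spanned_image:
  assumes "Vector_Spaces.linear s1 s2 f" "finitely_spanned s1 A"
  shows "finitely_spanned s2 (f ` A)"
proof -
  obtain B where "finite B" "A \<subseteq> vs1.span B"
    using assms(2) unfolding finitely_spanned_def by blast
  then have "finite (f ` B)" "f ` A \<subseteq> vs2.span (f ` B)"
    using linear_span_image[OF assms(1)] by auto
  then show ?thesis
    unfolding finitely_spanned_def by blast
qed

lemma subset_span_kernel_Un_preimage:
  assumes f: "Vector_Spaces.linear s1 s2 f" and A: "vs1.subspace A"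
    and C: "A \<inter> {x. f x = 0} \<subseteq> vs1.span C" and E: "E \<subseteq> A" "f ` A \<subseteq> vs2.span (f ` E)"
  shows "A \<subseteq> vs1.span (C \<union> E)"
proof
  fix a assume a: "a \<in> A"
  have "f a \<in> f ` vs1.span E"
    using a E(2) linear_span_image[OF f, of E] by auto
  then obtain e where e: "e \<in> vs1.span E" "f a = f e"
    by auto
  have "e \<in> A"
    using e(1) vs1.span_minimal[OF E(1) A] by blast
  moreover have "f (a - e) = 0"
    using e(2) linear_diff[OF f] by simp
  ultimately have "a - e \<in> vs1.span (C \<union> E)"
    using a A vs1.subspace_diff C vs1.span_mono[of C "C \<union> E"] by blast
  moreover have "e \<in> vs1.span (C \<union> E)"
    using e(1) vs1.span_mono[of E "C \<union> E"] by auto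
  ultimately have "(a - e) + e \<in> vs1.span (C \<union> E)"
    by (rule vs1.span_add)
  then show "a \<in> vs1.span (C \<union> E)"
    by simp
qed

lemma dim_le_dim_kernel_add_dim_image:
  assumes f: "Vector_Spaces.linear s1 s2 f" and A: "vs1.subspace A" "finitely_spanned s1 A"
  shows "vs1.dim A \<le> vs1.dim (A \<inter> {x. f x = 0}) + vs2.dim (f ` A)"
proof -
  obtain C where C: "C \<subseteq> A \<inter> {x. f x = 0}" "vs1.independent C"
    "A \<inter> {x. f x = 0} \<subseteq> vs1.span C" "card C = vs1.dim (A \<inter> {x. f x = 0})"
    by (rule vs1.basis_exists)
  obtain G where G: "G \<subseteq> f ` A" "vs2.independent G" "f ` A \<subseteq> vs2.span G"
    "card G = vs2.dim (f ` A)"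
    by (rule vs2.basis_exists)
  obtain E where E: "E \<subseteq> A" "inj_on f E" "G = f ` E"
    using subset_image_inj[THEN iffD1, OF G(1)] by blast
  have "finite C"
    using vs1.independent_in_span_finitely_spanned(1)[OF A(2) C(2)] C(1) vs1.span_superset
    by blast
  moreover have "finite G"
    using vs2.independent_in_span_finitely_spanned(1)[OF finitely_spanned_image[OF f A(2)] G(2)]
      G(1) vs2.span_superset by blast
  then have "finite E" "card E = card G"
    using E(3) finite_image_iff[OF E(2)] card_image[OF E(2)] by simp_all
  moreover have "A \<subseteq> vs1.span (C \<union> E)"
    using subset_span_kernel_Un_preimage[OF f A(1) C(3) E(1)] G(3) E(3) by blast
  ultimately have "vs1.dim A \<le> card (C \<union> E)"
    by (intro vs1.dim_le_card) simp_all
  also have "\<dots> \<le> card C + card E"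
    by (rule card_Un_le)
  finally show ?thesis
    using C(4) G(4) \<open>card E = card G\<close> by simp
qed

lemma dim_le_sum_dim_images:
  assumes "finite I"
    and "\<And>i. i \<in> I \<Longrightarrow> Vector_Spaces.linear s1 s2 (f i)"
    and "vs1.subspace A" "finitely_spanned s1 A"
    and "\<And>x. x \<in> A \<Longrightarrow> \<forall>i\<in>I. f i x = 0 \<Longrightarrow> x = 0"
  shows "vs1.dim A \<le> (\<Sum>i\<in>I. vs2.dim (f i ` A))"
  using assms
proof (induction I arbitrary: A rule: finite_induct)
  case empty
  then have "A \<subseteq> {0}"
    by auto
  then show ?case
    using vs1.dim_le_card[of A "{}"] by simp
next
  case (insert i I A)
  let ?K = "A \<inter> {x. f i x = 0}"
  have lin: "Vector_Spaces.linear s1 s2 (f i)"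
    using insert.prems(1) by simp
  have "vs1.dim A \<le> vs1.dim ?K + vs2.dim (f i ` A)"
    by (rule dim_le_dim_kernel_add_dim_image[OF lin insert.prems(2,3)])
  moreover have "vs1.dim ?K \<le> (\<Sum>j\<in>I. vs2.dim (f j ` ?K))"
  proof (rule insert.IH)
    show "Vector_Spaces.linear s1 s2 (f j)" if "j \<in> I" for j
      using insert.prems(1) that by simp
    show "vs1.subspace ?K"
      using vs1.subspace_inter[OF insert.prems(2) linear_subspace_kernel[OF lin]] by simp
    show "finitely_spanned s1 ?K"
      by (rule vs1.finitely_spanned_subset[OF insert.prems(3)]) (auto intro: vs1.span_base)
    show "x = 0" if "x \<in> ?K" "\<forall>j\<in>I. f j x = 0" for x
      using insert.prems(4) that by simp
  qed
  moreover have "(\<Sum>j\<in>I. vs2.dim (f j ` ?K)) \<le> (\<Sum>j\<in>I. vs2.dim (f j ` A))"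
  proof (rule sum_mono)
    fix j assume "j \<in> I"
    then have "finitely_spanned s2 (f j ` A)"
      by (intro finitely_spanned_image insert.prems(1,3)) simp
    then show "vs2.dim (f j ` ?K) \<le> vs2.dim (f j ` A)"
      by (rule vs2.dim_mono_finitely_spanned) (auto intro: vs2.span_base)
  qed
  ultimately show ?case
    using insert.hyps by simp
qed

end

lemma vector_space_field: "vector_space ((*) :: 'k::field \<Rightarrow> 'k \<Rightarrow> 'k)"
  by unfold_locales (simp_all add: algebra_simps)

lemma finite_dimensional_vector_space_field:
  "finite_dimensional_vector_space ((*) :: 'k::field \<Rightarrow> 'k \<Rightarrow> 'k) {1}"
proof -
  interpret K: vector_space "(*) :: 'k \<Rightarrow> 'k \<Rightarrow> 'k"
    by (rule vector_space_field)
  show ?thesis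
  proof
    show "K.span {1::'k} = UNIV"
      unfolding K.span_singleton by auto
  qed simp_all
qed

lemma dim_field: "vector_space.dim ((*) :: 'k::field \<Rightarrow> 'k \<Rightarrow> 'k) UNIV = 1"
proof -
  interpret K: finite_dimensional_vector_space "(*) :: 'k \<Rightarrow> 'k \<Rightarrow> 'k" "{1}"
    by (rule finite_dimensional_vector_space_field)
  show ?thesis
    by simp
qed

context finite_dimensional_vector_space
begin

lemma dim_span_insert:
  assumes "subspace Z" "x \<notin> Z"
  shows "dim (span (insert x Z)) = dim Z + 1"
proof -
  have "x \<notin> span Z"
    using assms span_eq_iff by metis
  then show ?thesis
    by (simp add: dim_insert)
qed

lemma subspace_codim_induct [consumes 1, case_names UNIV insert]:
  assumes "subspace Z"
    and UNIV: "P UNIV"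
    and insert: "\<And>Z x. subspace Z \<Longrightarrow> x \<notin> Z \<Longrightarrow> P (span (insert x Z)) \<Longrightarrow> P Z"
  shows "P Z"
proof -
  have "P Z" if "subspace Z" "dim UNIV - dim Z = n" for n Z
    using that
  proof (induction n arbitrary: Z rule: less_induct)
    case (less n Z)
    show ?case
    proof (cases "Z = UNIV")
      case True
      then show ?thesis using UNIV by simp
    next
      case False
      then obtain x where x: "x \<notin> Z"
        by blast
      have "dim (span (insert x Z)) \<le> dim UNIV"
        by (rule dim_subset) simp
      then have "dim UNIV - dim (span (insert x Z)) < n"
        using dim_span_insert[OF less.prems(1) x] less.prems(2) by linarith
      then have "P (span (insert x Z))"
        using less.IH by simp
      then show ?thesis
        using insert[OF less.prems(1) x] by blast
    qed
  qed
  then show ?thesis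
    using assms(1) by blast
qed

lemma obtain_basis_extending_pair:
  assumes "w \<noteq> 0" "v \<notin> span {w}"
  obtains I where "v \<in> I" "w \<in> I" "v \<noteq> w" "independent I" "span I = UNIV"
proof -
  have "independent {w}"
    using assms(1) by simp
  then have "independent {v, w}"
    by (rule independent_insertI[OF assms(2)])
  then obtain I where "{v, w} \<subseteq> I" "independent I" "UNIV \<subseteq> span I"
    by (rule maximal_independent_subset_extend[OF subset_UNIV])
  moreover have "v \<noteq> w"
    using assms(2) span_base[of w "{w}"] by auto
  ultimately show thesis
    using that by blast
qed

lemma separating_functionals:
  assumes "w \<noteq> 0" "v \<notin> span {w}"
  obtains I i0 \<psi> where "finite (I :: 'b set)" "card I = dim UNIV" "i0 \<in> I"
    "\<And>i. Vector_Spaces.linear scale (*) (\<psi> i)"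
    "\<And>y. \<forall>i\<in>I. \<psi> i y = 0 \<Longrightarrow> y = 0"
    "\<And>i. i \<in> I - {i0} \<Longrightarrow> \<psi> i w = 0 \<and> \<psi> i v = 1"
proof -
  interpret VK: vector_space_pair scale "(*) :: 'a \<Rightarrow> 'a \<Rightarrow> 'a"
    using vector_space_axioms vector_space_field by (rule vector_space_pair.intro)
  obtain I where I: "v \<in> I" "w \<in> I" "v \<noteq> w" "independent I" "span I = UNIV"
    using obtain_basis_extending_pair[OF assms] by blast
  define c where "c i y = representation I y i" for i y
  have c_lin: "Vector_Spaces.linear scale (*) (c i)" for i
    unfolding c_def by (rule linear_representation[OF I(4,5)])
  have c_basis: "c i b = (if i = b then 1 else 0)" if "b \<in> I" for i b
    unfolding c_def using representation_basis[OF I(4) that] by simp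
  \<comment> \<open>\<open>c v\<close> is not added to itself: \<open>2 * c v\<close> vanishes in characteristic 2\<close>
  define \<psi> where "\<psi> i = (if i = v then c v else (\<lambda>y. c i y + c v y))" for i
  have lin: "Vector_Spaces.linear scale (*) (\<psi> i)" for i
    unfolding \<psi>_def using c_lin VK.linear_compose_add[OF c_lin c_lin] by simp
  have on_v_w: "\<psi> i w = 0 \<and> \<psi> i v = 1" if "i \<in> I - {w}" for i
    using that I(1-3) c_basis[of w] c_basis[of v] by (simp add: \<psi>_def)
  have kernel: "y = 0" if y: "\<forall>i\<in>I. \<psi> i y = 0" for y
  proof (rule representation_eq_0_imp_eq_0[OF I(4)])
    have "c v y = \<psi> v y"
      by (simp add: \<psi>_def)
    then have "c v y = 0"
      using y I(1) by simp
    show "representation I y i = 0" if "i \<in> I" for i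
    proof -
      have "\<psi> i y = 0"
        using y that by blast
      then show ?thesis
        using \<open>c v y = 0\<close> unfolding c_def[symmetric] by (simp add: \<psi>_def split: if_splits)
    qed
  qed (simp add: I(5))
  have "finite I" "card I = dim UNIV"
    using finiteI_independent[OF I(4)] dim_eq_card[of I UNIV] I(4,5) by simp_all
  then show thesis
    using that I(2) lin kernel on_v_w by blast
qed

end

lemma sum_fun_apply: "(\<Sum>i\<in>A. f i) x = (\<Sum>i\<in>A. f i x)"
  by (induction A rule: infinite_finite_induct) simp_all

lemma vector_space_fun_scale: "vector_space s \<Longrightarrow> vector_space (fun_scale s)"
  unfolding vector_space_def fun_scale_def by (simp add: fun_eq_iff)

lemma linear_eval:
  assumes "vector_space s"
  shows "Vector_Spaces.linear (fun_scale s) s (\<lambda>f. f x)"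
  using vector_space_fun_scale[OF assms] assms
  by (simp add: Vector_Spaces.linear_iff fun_scale_def)

lemma linear_postcompose:
  assumes "Vector_Spaces.linear s2 s3 \<psi>"
  shows "Vector_Spaces.linear (fun_scale s2) (fun_scale s3) (\<lambda>t. \<psi> \<circ> t)"
proof -
  interpret Vector_Spaces.linear s2 s3 \<psi> by fact
  show ?thesis
    using vector_space_fun_scale[OF vs1.vector_space_axioms]
      vector_space_fun_scale[OF vs2.vector_space_axioms]
    by (simp add: Vector_Spaces.linear_iff fun_scale_def fun_eq_iff add scale)
qed

lemma additive_on_diff_eval:
  fixes F :: "('u \<Rightarrow> 'v::ab_group_add) \<Rightarrow> 'v"
  shows "additive_on S F \<Longrightarrow> additive_on S (\<lambda>s. F s - s x)"
  by (simp add: additive_on_def algebra_simps)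

definition lin_maps_vanishing_on ::
    "('k::field \<Rightarrow> 'u::ab_group_add \<Rightarrow> 'u) \<Rightarrow> ('k \<Rightarrow> 'v::ab_group_add \<Rightarrow> 'v) \<Rightarrow> 'u set \<Rightarrow> ('u \<Rightarrow> 'v) set"
  where "lin_maps_vanishing_on sU sV Z = {f \<in> lin_maps sU sV. \<forall>z\<in>Z. f z = 0}"

lemma comp_in_lin_maps_vanishing_on:
  assumes "Vector_Spaces.linear s2 s3 \<psi>" "t \<in> lin_maps_vanishing_on s1 s2 Z"
  shows "\<psi> \<circ> t \<in> lin_maps_vanishing_on s1 s3 Z"
proof -
  interpret Vector_Spaces.linear s2 s3 \<psi> by fact
  show ?thesis
    using assms Vector_Spaces.linear_compose[of s1 s2 t s3 \<psi>]
    by (simp add: lin_maps_vanishing_on_def lin_maps_def)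
qed

sublocale vector_space_pair \<subseteq> maps: vector_space "fun_scale s2 :: 'a \<Rightarrow> ('b \<Rightarrow> 'c) \<Rightarrow> 'b \<Rightarrow> 'c"
  by (rule vector_space_fun_scale) (rule vs2.vector_space_axioms)

context vector_space_pair
begin

lemma range_compatible_diff_eval:
  assumes "S \<subseteq> lin_maps s1 s2" "range_compatible S F"
  shows "range_compatible S (\<lambda>s. F s - s x)"
  unfolding range_compatible_def
proof
  fix s assume s: "s \<in> S"
  then obtain y where "F s = s y"
    using assms(2) unfolding range_compatible_def by blast
  moreover have "Vector_Spaces.linear s1 s2 s"
    using assms(1) s by (auto simp: lin_maps_def)
  ultimately have "F s - s x = s (y - x)"
    by (simp add: linear_diff)
  then show "F s - s x \<in> range s"
    by simp
qed

lemma lin_maps_vanishing_on_zero: "lin_maps_vanishing_on s1 s2 {0} = lin_maps s1 s2"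
  by (auto simp: lin_maps_vanishing_on_def lin_maps_def linear_0)

lemma lin_maps_vanishing_on_span:
  "lin_maps_vanishing_on s1 s2 (vs1.span Z) = lin_maps_vanishing_on s1 s2 Z"
proof
  show "lin_maps_vanishing_on s1 s2 (vs1.span Z) \<subseteq> lin_maps_vanishing_on s1 s2 Z"
    using vs1.span_base by (auto simp: lin_maps_vanishing_on_def)
  show "lin_maps_vanishing_on s1 s2 Z \<subseteq> lin_maps_vanishing_on s1 s2 (vs1.span Z)"
    using linear_eq_0_on_span by (auto simp: lin_maps_vanishing_on_def lin_maps_def)
qed

lemma lin_maps_vanishing_on_insert:
  "lin_maps_vanishing_on s1 s2 Z \<inter> {f. f x = 0} = lin_maps_vanishing_on s1 s2 (vs1.span (insert x Z))"
proof -
  have "lin_maps_vanishing_on s1 s2 Z \<inter> {f. f x = 0} = lin_maps_vanishing_on s1 s2 (insert x Z)"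
    by (auto simp: lin_maps_vanishing_on_def)
  then show ?thesis
    by (simp only: lin_maps_vanishing_on_span)
qed

lemma subspace_lin_maps_vanishing_on: "maps.subspace (lin_maps_vanishing_on s1 s2 Z)"
proof -
  have "0 \<in> lin_maps_vanishing_on s1 s2 Z"
    using linear_zero by (simp add: lin_maps_vanishing_on_def lin_maps_def zero_fun_def)
  moreover have "f + g \<in> lin_maps_vanishing_on s1 s2 Z"
    if "f \<in> lin_maps_vanishing_on s1 s2 Z" "g \<in> lin_maps_vanishing_on s1 s2 Z" for f g
    using that linear_compose_add[of f g]
    by (simp add: lin_maps_vanishing_on_def lin_maps_def plus_fun_def)
  moreover have "fun_scale s2 c f \<in> lin_maps_vanishing_on s1 s2 Z"
    if "f \<in> lin_maps_vanishing_on s1 s2 Z" for c f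
    using that linear_compose_scale_right[of f c]
    by (simp add: lin_maps_vanishing_on_def lin_maps_def fun_scale_def)
  ultimately show ?thesis
    unfolding maps.subspace_def by blast
qed

end

context finite_dimensional_vector_space_pair
begin

lemma linear_eq_sum_Basis:
  assumes "Vector_Spaces.linear s1 s2 f"
  shows "f u = (\<Sum>b\<in>B1. vs1.representation B1 u b *b f b)"
proof -
  have "f u = f (\<Sum>b\<in>B1. vs1.representation B1 u b *a b)"
    using vs1.sum_representation_eq[of B1 u B1] vs1.independent_Basis vs1.span_Basis
      vs1.finite_Basis by simp
  then show ?thesis
    unfolding linear_sum[OF assms] linear_scale[OF assms] .
qed

lemma finitely_spanned_lin_maps: "finitely_spanned (fun_scale s2) (lin_maps s1 s2)"
proof -
  define E where "E b y = (\<lambda>u. vs1.representation B1 u b *b y)" for b y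
  interpret E: vector_space_pair s2 "fun_scale s2 :: 'a \<Rightarrow> ('b \<Rightarrow> 'c) \<Rightarrow> 'b \<Rightarrow> 'c"
    using vs2.vector_space_axioms maps.vector_space_axioms by (rule vector_space_pair.intro)
  have E_lin: "Vector_Spaces.linear s2 (fun_scale s2) (E b)" for b
    using vs2.vector_space_axioms maps.vector_space_axioms
    by (simp add: E_def Vector_Spaces.linear_iff fun_scale_def fun_eq_iff
        vs2.scale_right_distrib mult.commute)
  have E_span: "E b y \<in> maps.span (\<Union>b\<in>B1. E b ` B2)" if "b \<in> B1" for b y
  proof -
    have "E b y \<in> E b ` vs2.span B2"
      using vs2.span_Basis by simp
    also have "\<dots> = maps.span (E b ` B2)"
      by (rule E.linear_span_image[OF E_lin, symmetric])
    also have "\<dots> \<subseteq> maps.span (\<Union>b\<in>B1. E b ` B2)"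
      using that by (intro maps.span_mono) blast
    finally show ?thesis .
  qed
  have "f \<in> maps.span (\<Union>b\<in>B1. E b ` B2)" if "f \<in> lin_maps s1 s2" for f
  proof -
    have "f u = (\<Sum>b\<in>B1. E b (f b)) u" for u
      using linear_eq_sum_Basis[of f u] that by (simp add: lin_maps_def E_def sum_fun_apply)
    then have "f = (\<Sum>b\<in>B1. E b (f b))"
      by (rule ext)
    moreover have "(\<Sum>b\<in>B1. E b (f b)) \<in> maps.span (\<Union>b\<in>B1. E b ` B2)"
      using E_span by (rule maps.span_sum)
    ultimately show ?thesis
      by simp
  qed
  moreover have "finite (\<Union>b\<in>B1. E b ` B2)"
    using vs1.finite_Basis vs2.finite_Basis by simp
  ultimately show ?thesis
    unfolding finitely_spanned_def by blast
qed

lemma finitely_spanned_lin_maps_vanishing_on: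
  "finitely_spanned (fun_scale s2) (lin_maps_vanishing_on s1 s2 Z)"
  by (rule maps.finitely_spanned_subset[OF finitely_spanned_lin_maps])
    (auto simp: lin_maps_vanishing_on_def intro: maps.span_base)

lemma dim_lin_maps_vanishing_on_le:
  assumes "vs1.subspace Z" "A \<subseteq> lin_maps_vanishing_on s1 s2 Z"
  shows "maps.dim A \<le> (vs1.dim UNIV - vs1.dim Z) * vs2.dim UNIV"
proof -
  interpret eval: vector_space_pair "fun_scale s2 :: 'a \<Rightarrow> ('b \<Rightarrow> 'c) \<Rightarrow> 'b \<Rightarrow> 'c" s2
    using maps.vector_space_axioms vs2.vector_space_axioms by (rule vector_space_pair.intro)
  have "maps.dim (lin_maps_vanishing_on s1 s2 Z) \<le> (vs1.dim UNIV - vs1.dim Z) * vs2.dim UNIV"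
    using assms(1)
  proof (induction Z rule: vs1.subspace_codim_induct)
    case UNIV
    have "lin_maps_vanishing_on s1 s2 UNIV \<subseteq> {0}"
      by (auto simp: lin_maps_vanishing_on_def)
    then show ?case
      using maps.dim_le_card[of _ "{}"] by simp
  next
    case (insert Z x)
    let ?L = "lin_maps_vanishing_on s1 s2 Z"
    let ?Z' = "vs1.span (insert x Z)"
    have "maps.dim ?L \<le> maps.dim (?L \<inter> {f. f x = 0}) + vs2.dim ((\<lambda>f. f x) ` ?L)"
      by (rule eval.dim_le_dim_kernel_add_dim_image[OF linear_eval[OF vs2.vector_space_axioms]
            subspace_lin_maps_vanishing_on finitely_spanned_lin_maps_vanishing_on])
    moreover have "vs2.dim ((\<lambda>f. f x) ` ?L) \<le> vs2.dim UNIV"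
      by (rule vs2.dim_subset) simp
    moreover have "vs1.dim ?Z' \<le> vs1.dim UNIV"
      by (rule vs1.dim_subset) simp
    then have "vs1.dim UNIV - vs1.dim Z = Suc (vs1.dim UNIV - vs1.dim ?Z')"
      using vs1.dim_span_insert[OF insert.hyps] by linarith
    ultimately show ?case
      using insert.IH by (simp add: lin_maps_vanishing_on_insert)
  qed
  moreover have "A \<subseteq> maps.span (lin_maps_vanishing_on s1 s2 Z)"
    using assms(2) maps.span_superset by blast
  then have "maps.dim A \<le> maps.dim (lin_maps_vanishing_on s1 s2 Z)"
    by (rule maps.dim_mono_finitely_spanned[OF finitely_spanned_lin_maps_vanishing_on])
  ultimately show ?thesis
    by linarith
qed

lemma codim_condition_kernel_eval:
  assumes Z: "vs1.subspace Z" "x \<notin> Z"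
    and S: "S \<subseteq> lin_maps_vanishing_on s1 s2 Z" "maps.subspace S"
    and codim: "(vs1.dim UNIV - vs1.dim Z) * vs2.dim UNIV + 2 \<le> maps.dim S + vs2.dim UNIV"
  shows "(vs1.dim UNIV - vs1.dim (vs1.span (insert x Z))) * vs2.dim UNIV + 2
      \<le> maps.dim (S \<inter> {s. s x = 0}) + vs2.dim UNIV"
    and "2 \<le> vs2.dim ((\<lambda>s. s x) ` S)"
proof -
  interpret eval: vector_space_pair "fun_scale s2 :: 'a \<Rightarrow> ('b \<Rightarrow> 'c) \<Rightarrow> 'b \<Rightarrow> 'c" s2
    using maps.vector_space_axioms vs2.vector_space_axioms by (rule vector_space_pair.intro)
  let ?Z' = "vs1.span (insert x Z)"
  define n where "n = vs1.dim UNIV - vs1.dim ?Z'"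
  have "vs1.dim ?Z' \<le> vs1.dim UNIV"
    by (rule vs1.dim_subset) simp
  then have n: "vs1.dim UNIV - vs1.dim Z = Suc n"
    unfolding n_def using vs1.dim_span_insert[OF Z] by linarith
  have fin: "finitely_spanned (fun_scale s2) S"
    using maps.finitely_spanned_subset[OF finitely_spanned_lin_maps_vanishing_on] S(1)
      maps.span_superset by blast
  have "maps.dim S \<le> maps.dim (S \<inter> {s. s x = 0}) + vs2.dim ((\<lambda>s. s x) ` S)"
    by (rule eval.dim_le_dim_kernel_add_dim_image[OF linear_eval[OF vs2.vector_space_axioms]
          S(2) fin])
  moreover have "vs2.dim ((\<lambda>s. s x) ` S) \<le> vs2.dim UNIV"
    by (rule vs2.dim_subset) simp
  moreover have "S \<inter> {s. s x = 0} \<subseteq> lin_maps_vanishing_on s1 s2 ?Z'"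
    using S(1) unfolding lin_maps_vanishing_on_insert[symmetric] by blast
  then have "maps.dim (S \<inter> {s. s x = 0}) \<le> n * vs2.dim UNIV"
    unfolding n_def by (rule dim_lin_maps_vanishing_on_le[rotated]) simp
  ultimately show "n * vs2.dim UNIV + 2 \<le> maps.dim (S \<inter> {s. s x = 0}) + vs2.dim UNIV"
    and "2 \<le> vs2.dim ((\<lambda>s. s x) ` S)"
    using codim unfolding n by simp_all
qed

end

lemma sum_add_card_le_if_all_but_one_less:
  fixes d :: "'i \<Rightarrow> nat"
  assumes "finite I" "i0 \<in> I" "d i0 \<le> n" "\<And>i. i \<in> I - {i0} \<Longrightarrow> d i < n"
  shows "sum d I + card I \<le> n * card I + 1"
proof -
  have "(\<Sum>i\<in>I - {i0}. d i + 1) \<le> (\<Sum>i\<in>I - {i0}. n)"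
    using assms(4) by (intro sum_mono) (simp add: Suc_le_eq)
  with assms(3) have "(\<Sum>i\<in>I. d i + 1) \<le> (\<Sum>i\<in>I. n) + 1"
    unfolding sum.remove[OF assms(1,2)] by simp
  then show ?thesis
    unfolding sum.distrib by (simp add: mult.commute)
qed

text \<open>
  This instance only carries the facts of the locale proved before it is declared, which is why it
  comes after the dimension bound for \<open>lin_maps_vanishing_on\<close>.
\<close>

sublocale finite_dimensional_vector_space_pair \<subseteq>
    functionals: finite_dimensional_vector_space_pair s1 B1 "(*) :: 'a \<Rightarrow> 'a \<Rightarrow> 'a" "{1}"
  using vs1.finite_dimensional_vector_space_axioms finite_dimensional_vector_space_field
  by (rule finite_dimensional_vector_space_pair.intro)

sublocale finite_dimensional_vector_space_pair \<subseteq>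
    postcompose: vector_space_pair "fun_scale s2 :: 'a \<Rightarrow> ('b \<Rightarrow> 'c) \<Rightarrow> 'b \<Rightarrow> 'c"
      "fun_scale (*) :: 'a \<Rightarrow> ('b \<Rightarrow> 'a) \<Rightarrow> 'b \<Rightarrow> 'a"
  using maps.vector_space_axioms functionals.maps.vector_space_axioms
  by (rule vector_space_pair.intro)

context finite_dimensional_vector_space_pair
begin

lemma dim_postcompose_image_le:
  assumes "vs1.subspace Z" "T \<subseteq> lin_maps_vanishing_on s1 s2 Z" "Vector_Spaces.linear s2 (*) \<psi>"
  shows "functionals.maps.dim ((\<lambda>t. \<psi> \<circ> t) ` T) \<le> vs1.dim UNIV - vs1.dim Z"
proof -
  have "(\<lambda>t. \<psi> \<circ> t) ` T \<subseteq> lin_maps_vanishing_on s1 (*) Z"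
    using comp_in_lin_maps_vanishing_on[OF assms(3)] assms(2) by blast
  from functionals.dim_lin_maps_vanishing_on_le[OF assms(1) this] show ?thesis
    using dim_field by simp
qed

text \<open>If every \<open>s + t\<close> with \<open>t \<in> T\<close> has \<open>v\<close> in its range, the form \<open>- (\<psi> \<circ> s)\<close> misses \<open>\<psi> \<circ> T\<close>.\<close>

lemma dim_postcompose_image_less:
  assumes Z: "vs1.subspace Z"
    and T: "maps.subspace T" "T \<subseteq> lin_maps_vanishing_on s1 s2 Z"
    and \<psi>: "Vector_Spaces.linear s2 (*) \<psi>" "\<psi> v \<noteq> 0"
    and s: "s \<in> lin_maps s1 s2" "\<And>z. z \<in> Z \<Longrightarrow> \<psi> (s z) = 0"
    and v: "\<And>t. t \<in> T \<Longrightarrow> v \<in> range (s + t)"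
  shows "functionals.maps.dim ((\<lambda>t. \<psi> \<circ> t) ` T) < vs1.dim UNIV - vs1.dim Z"
proof -
  let ?C = "lin_maps_vanishing_on s1 (*) Z"
  have image_sub: "(\<lambda>t. \<psi> \<circ> t) ` T \<subseteq> ?C"
    using comp_in_lin_maps_vanishing_on[OF \<psi>(1)] T(2) by blast
  have "\<psi> \<circ> s \<in> ?C"
    using s Vector_Spaces.linear_compose[OF _ \<psi>(1), of s1 s]
    by (simp add: lin_maps_vanishing_on_def lin_maps_def)
  then have missing: "- (\<psi> \<circ> s) \<in> ?C"
    using functionals.maps.subspace_neg[OF functionals.subspace_lin_maps_vanishing_on]
    by (simp add: fun_scale_def)
  have "- (\<psi> \<circ> s) \<notin> (\<lambda>t. \<psi> \<circ> t) ` T"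
  proof
    assume "- (\<psi> \<circ> s) \<in> (\<lambda>t. \<psi> \<circ> t) ` T"
    then obtain t where t: "t \<in> T" "\<psi> \<circ> t = - (\<psi> \<circ> s)"
      by auto
    obtain y where "v = s y + t y"
      using v[OF t(1)] by auto
    then have "\<psi> v = \<psi> (s y) + \<psi> (t y)"
      using module_hom.add[OF \<psi>(1)[unfolded linear_iff_module_hom]] by simp
    also have "\<dots> = 0"
      using fun_cong[OF t(2), of y] by simp
    finally show False
      using \<psi>(2) by simp
  qed
  moreover have "functionals.maps.subspace ((\<lambda>t. \<psi> \<circ> t) ` T)"
    by (rule postcompose.linear_subspace_image[OF linear_postcompose[OF \<psi>(1)] T(1)])
  ultimately have "functionals.maps.dim ((\<lambda>t. \<psi> \<circ> t) ` T) < functionals.maps.dim ?C"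
    using functionals.maps.dim_less_finitely_spanned[OF functionals.finitely_spanned_lin_maps_vanishing_on]
      image_sub missing functionals.maps.span_superset by blast
  also have "\<dots> \<le> vs1.dim UNIV - vs1.dim Z"
    using functionals.dim_lin_maps_vanishing_on_le[OF Z order_refl] dim_field by simp
  finally show ?thesis .
qed

lemma dim_le_sum_dim_postcompose:
  assumes T: "maps.subspace T" "T \<subseteq> lin_maps s1 s2"
    and I: "finite I" "\<And>i. Vector_Spaces.linear s2 (*) (\<psi> i)"
    and separating: "\<And>y. \<forall>i\<in>I. \<psi> i y = 0 \<Longrightarrow> y = 0"
  shows "maps.dim T \<le> (\<Sum>i\<in>I. functionals.maps.dim ((\<lambda>t. \<psi> i \<circ> t) ` T))"
proof (rule postcompose.dim_le_sum_dim_images[OF I(1) linear_postcompose[OF I(2)] T(1)])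
  show "finitely_spanned (fun_scale s2) T"
    using maps.finitely_spanned_subset[OF finitely_spanned_lin_maps] T(2) maps.span_superset
    by blast
  show "t = 0" if "\<forall>i\<in>I. \<psi> i \<circ> t = 0" for t
  proof
    show "t u = 0 u" for u
      using separating[of "t u"] that by (simp add: fun_eq_iff)
  qed
qed


lemma common_range_vector_in_span:
  assumes Z: "vs1.subspace Z"
    and T: "maps.subspace T" "T \<subseteq> lin_maps_vanishing_on s1 s2 Z"
    and codim: "(vs1.dim UNIV - vs1.dim Z) * vs2.dim UNIV + 2 \<le> maps.dim T + vs2.dim UNIV"
    and s: "s \<in> lin_maps s1 s2" "s ` Z \<subseteq> vs2.span {w}" "w \<noteq> 0"
    and v: "\<And>t. t \<in> T \<Longrightarrow> v \<in> range (s + t)"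
  shows "v \<in> vs2.span {w}"
proof (rule ccontr)
  assume "v \<notin> vs2.span {w}"
  then obtain I i0 \<psi> where I: "finite (I :: 'c set)" "card I = vs2.dim UNIV" "i0 \<in> I"
    and \<psi>_lin: "\<And>i. Vector_Spaces.linear s2 (*) (\<psi> i)"
    and separating: "\<And>y. \<forall>i\<in>I. \<psi> i y = 0 \<Longrightarrow> y = 0"
    and \<psi>_w_v: "\<And>i. i \<in> I - {i0} \<Longrightarrow> \<psi> i w = 0 \<and> \<psi> i v = 1"
    using vs2.separating_functionals[OF s(3)] by blast
  define d where "d i = functionals.maps.dim ((\<lambda>t. \<psi> i \<circ> t) ` T)" for i
  have "d i0 \<le> vs1.dim UNIV - vs1.dim Z"
    unfolding d_def by (rule dim_postcompose_image_le[OF Z T(2) \<psi>_lin])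
  moreover have "d i < vs1.dim UNIV - vs1.dim Z" if i: "i \<in> I - {i0}" for i
    unfolding d_def
  proof (rule dim_postcompose_image_less[OF Z T \<psi>_lin _ s(1) _ v])
    show "\<psi> i v \<noteq> 0"
      using \<psi>_w_v[OF i] by simp
    show "\<psi> i (s z) = 0" if "z \<in> Z" for z
    proof -
      have "s z \<in> vs2.span {w}"
        using s(2) that by blast
      then obtain c where "s z = c *b w"
        unfolding vs2.span_singleton by (rule rangeE)
      then have "\<psi> i (s z) = c * \<psi> i w"
        using module_hom.scale[OF \<psi>_lin[unfolded linear_iff_module_hom]] by simp
      then show ?thesis
        using \<psi>_w_v[OF i] by simp
    qed
  qed
  ultimately have "sum d I + card I \<le> (vs1.dim UNIV - vs1.dim Z) * card I + 1"
    by (rule sum_add_card_le_if_all_but_one_less[OF I(1,3)])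
  moreover have "T \<subseteq> lin_maps s1 s2"
    using T(2) by (auto simp: lin_maps_vanishing_on_def)
  then have "maps.dim T \<le> sum d I"
    unfolding d_def by (rule dim_le_sum_dim_postcompose[OF T(1) _ I(1) \<psi>_lin separating])
  ultimately show False
    using codim unfolding I(2) by linarith
qed

lemma range_compatible_vanishing_on_kernel_collinear:
  assumes Z: "vs1.subspace Z" "x \<notin> Z"
    and S: "S \<subseteq> lin_maps_vanishing_on s1 s2 Z" "maps.subspace S"
    and codim: "(vs1.dim UNIV - vs1.dim Z) * vs2.dim UNIV + 2 \<le> maps.dim S + vs2.dim UNIV"
    and H: "additive_on S H" "range_compatible S H" "\<And>s. s \<in> S \<Longrightarrow> s x = 0 \<Longrightarrow> H s = 0"
    and s: "s \<in> S"
  shows "H s \<in> vs2.span {s x}"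
proof (cases "s x = 0")
  case True
  then show ?thesis
    using H(3)[OF s] vs2.span_zero by simp
next
  case False
  let ?Z' = "vs1.span (insert x Z)"
  let ?S' = "S \<inter> {s. s x = 0}"
  have S'_eq: "?S' = S \<inter> lin_maps_vanishing_on s1 s2 ?Z'"
    using S(1) unfolding lin_maps_vanishing_on_insert[symmetric] by blast
  have s_lin: "s \<in> lin_maps s1 s2"
    using S(1) s by (auto simp: lin_maps_vanishing_on_def)
  have "s ` insert x Z \<subseteq> vs2.span {s x}"
    using S(1) s vs2.span_base vs2.span_zero by (auto simp: lin_maps_vanishing_on_def)
  then have "vs2.span (s ` insert x Z) \<subseteq> vs2.span {s x}"
    by (rule vs2.span_minimal) simp
  then have "s ` ?Z' \<subseteq> vs2.span {s x}"
    using linear_span_image[of s "insert x Z"] s_lin by (simp add: lin_maps_def)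
  moreover have "H s \<in> range (s + t)" if "t \<in> ?S'" for t
  proof -
    have "H s = H (s + t)"
      using H(1,3) s that by (simp add: additive_on_def)
    moreover have "s + t \<in> S"
      using maps.subspace_add[OF S(2) s] that by blast
    then have "H (s + t) \<in> range (s + t)"
      using H(2) unfolding range_compatible_def by blast
    ultimately show ?thesis
      by (simp only:)
  qed
  ultimately show ?thesis
    using common_range_vector_in_span[OF vs1.subspace_span _ _ codim_condition_kernel_eval(1)[OF Z S codim]
        s_lin _ False] maps.subspace_inter[OF S(2) subspace_lin_maps_vanishing_on] S'_eq
    by simp
qed

lemma is_local_of_is_local_kernel_eval:
  assumes Z: "vs1.subspace Z" "x \<notin> Z"
    and S: "S \<subseteq> lin_maps_vanishing_on s1 s2 Z" "maps.subspace S"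
    and codim: "(vs1.dim UNIV - vs1.dim Z) * vs2.dim UNIV + 2 \<le> maps.dim S + vs2.dim UNIV"
    and F: "additive_on S F" "range_compatible S F"
    and local: "is_local (S \<inter> {s. s x = 0}) F"
  shows "is_local S F"
proof -
  obtain x' where x': "\<And>s. s \<in> S \<Longrightarrow> s x = 0 \<Longrightarrow> F s = s x'"
    using local unfolding is_local_def by blast
  define H where "H s = F s - s x'" for s
  have S_lin: "S \<subseteq> lin_maps s1 s2"
    using S(1) by (auto simp: lin_maps_vanishing_on_def)
  have H_add: "additive_on S H"
    unfolding H_def using F(1) by (rule additive_on_diff_eval)
  have H_rc: "range_compatible S H"
    unfolding H_def using S_lin F(2) by (rule range_compatible_diff_eval)
  have "H s = 0" if "s \<in> S" "s x = 0" for s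
    using x'[OF that] by (simp add: H_def)
  then have collinear: "H s \<in> vs2.span {s x}" if "s \<in> S" for s
    by (rule range_compatible_vanishing_on_kernel_collinear[OF Z S codim H_add H_rc _ that])
  have closed: "s + t \<in> S" if "s \<in> S" "t \<in> S" for s t
    using maps.subspace_add[OF S(2) that] .
  have H_plus: "H (s + t) = H s + H t" if "s \<in> S" "t \<in> S" for s t
    using H_add that unfolding additive_on_def by blast
  obtain c where c: "\<And>s. s \<in> S \<Longrightarrow> H s = c *b s x"
    using vs2.additive_collinear_imp_scalar[of S "\<lambda>s. s x" H, OF closed _ H_plus collinear
        codim_condition_kernel_eval(2)[OF Z S codim]]
    by auto
  have "F s = s (c *a x + x')" if "s \<in> S" for s
  proof -
    have "Vector_Spaces.linear s1 s2 s"
      using S_lin that by (auto simp: lin_maps_def)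
    then have "s (c *a x + x') = c *b s x + s x'"
      by (simp add: linear_add linear_scale)
    also have "\<dots> = F s"
      using c[OF that] by (simp add: H_def diff_eq_eq)
    finally show ?thesis ..
  qed
  then show ?thesis
    unfolding is_local_def by blast
qed

lemma is_local_if_codim_le:
  assumes "vs1.subspace Z"
    and "S \<subseteq> lin_maps_vanishing_on s1 s2 Z" "maps.subspace S"
    and "(vs1.dim UNIV - vs1.dim Z) * vs2.dim UNIV + 2 \<le> maps.dim S + vs2.dim UNIV"
    and "additive_on S F" "range_compatible S F"
  shows "is_local S F"
  using assms
proof (induction Z arbitrary: S rule: vs1.subspace_codim_induct)
  case UNIV
  have "F s = s 0" if "s \<in> S" for s
  proof -
    have "F s \<in> range s"
      using UNIV.prems(5) that by (simp add: range_compatible_def)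
    moreover have "\<forall>u. s u = 0"
      using UNIV.prems(1) that by (simp add: lin_maps_vanishing_on_def subset_iff)
    ultimately show ?thesis
      by auto
  qed
  then show ?case
    unfolding is_local_def by blast
next
  case (insert Z x)
  let ?S' = "S \<inter> {s. s x = 0}"
  have S'_eq: "?S' = S \<inter> lin_maps_vanishing_on s1 s2 (vs1.span (insert x Z))"
    using insert.prems(1) unfolding lin_maps_vanishing_on_insert[symmetric] by blast
  have "is_local ?S' F"
  proof (rule insert.IH)
    show "?S' \<subseteq> lin_maps_vanishing_on s1 s2 (vs1.span (insert x Z))"
      unfolding S'_eq by blast
    show "maps.subspace ?S'"
      unfolding S'_eq by (rule maps.subspace_inter[OF insert.prems(2) subspace_lin_maps_vanishing_on])
    show "(vs1.dim UNIV - vs1.dim (vs1.span (insert x Z))) * vs2.dim UNIV + 2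
        \<le> maps.dim ?S' + vs2.dim UNIV"
      by (rule codim_condition_kernel_eval(1)[OF insert.hyps insert.prems(1-3)])
    show "additive_on ?S' F" "range_compatible ?S' F"
      using insert.prems(4,5) unfolding additive_on_def range_compatible_def by blast+
  qed
  then show ?case
    by (rule is_local_of_is_local_kernel_eval[OF insert.hyps insert.prems])
qed

end

theorem theorem1p5:
  fixes scaleU :: "'k::field \<Rightarrow> 'u::ab_group_add \<Rightarrow> 'u"
    and scaleV :: "'k \<Rightarrow> 'v::ab_group_add \<Rightarrow> 'v"
    and BU :: "'u set" and BV :: "'v set"
    and S :: "('u \<Rightarrow> 'v) set"
    and F :: "('u \<Rightarrow> 'v) \<Rightarrow> 'v"
  assumes U: "finite_dimensional_vector_space scaleU BU"
    and V: "finite_dimensional_vector_space scaleV BV"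
    and S_lin: "S \<subseteq> lin_maps scaleU scaleV"
    and S_sub: "module.subspace (fun_scale scaleV) S"
    and codim: "vector_space.dim scaleU (UNIV :: 'u set) * vector_space.dim scaleV (UNIV :: 'v set) + 2
                \<le> vector_space.dim (fun_scale scaleV) S + vector_space.dim scaleV (UNIV :: 'v set)"
    and F_hom: "additive_on S F"
    and F_rc: "range_compatible S F"
  shows "is_local S F"
proof -
  interpret finite_dimensional_vector_space_pair scaleU BU scaleV BV
    using U V by (rule finite_dimensional_vector_space_pair.intro)
  have "vs1.dim {0} = 0"
    using vs1.dim_le_card[of "{0}" "{}"] by simp
  with codim have "(vs1.dim UNIV - vs1.dim {0}) * vs2.dim UNIV + 2 \<le> maps.dim S + vs2.dim UNIV"
    by simp
  moreover have "S \<subseteq> lin_maps_vanishing_on scaleU scaleV {0}"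
    using S_lin by (simp add: lin_maps_vanishing_on_zero)
  ultimately show ?thesis
    using is_local_if_codim_le[OF vs1.subspace_single_0 _ S_sub _ F_hom F_rc] by blast
qed

end
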